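(* Let $n\ge 1$ and $M\ge 1$ be integers, let $\mathcal{X}=\{x^{(1)},\dots,x^{(L)}\}\subset\mathbb{C}$ be a finite set of $L$ channel input symbols, let $\sigma^2>0$, let $g:\mathbb{C}\to[0,+\infty]$ be a measurable function, let $\epsilon>0$, $B\in\mathbb{R}$ and $\delta<1$. Let $\mathscr{C}$ be an $(n,M,\epsilon,B,\delta)$-code (as defined in the context). Then $$B\le \frac{1}{1-\delta}\sum_{\ell=1}^{L}P_{\mathscr{C}}(x^{(\ell)})\,\mathbb{E}\big[g(x^{(\ell)}+W)\big],$$ where $W$ is a complex circularly symmetric Gaussian random variable whose real and imaginary parts have zero means and variances $\sigma^2/2$.
   Context: Channel: for an input $\boldsymbol{x}=(x_1,\dots,x_n)\in\mathbb{C}^n$ the outputs are $\boldsymbol{Y}=\boldsymbol{x}+\boldsymbol{N}_1$ (at the information receiver) and $\boldsymbol{Z}=\boldsymbol{x}+\boldsymbol{N}_2$ (at the energy harvester), where all $2n$ components of $\boldsymbol{N}_1,\boldsymbol{N}_2$ are i.i.d. complex circularly symmetric Gaussian random variables whose real and imaginary parts are independent with zero mean and variance $\sigma^2/2$. Thus each output coordinate has conditional density $f_{Y|X}(y|x)=\frac{1}{\pi\sigma^2}\exp(-|y-x|^2/\sigma^2)$ and $f_{\boldsymbol{Y}|\boldsymbol{X}}(\boldsymbol{y}|\boldsymbol{x})=\prod_{t=1}^n f_{Y|X}(y_t|x_t)$ (same for $\boldsymbol{Z}$). An $(n,M)$-code is a system $\mathscr{C}=\{(\boldsymbol{u}(1),\mathcal{D}_1),\dots,(\boldsymbol{u}(M),\mathcal{D}_M)\}$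 with codewords $\boldsymbol{u}(i)=(u_1(i),\dots,u_n(i))\in\mathcal{X}^n$ satisfying a peak-power constraint $|u_t(i)|\le P$ for a fixed $P>0$, and pairwise disjoint measurable decoding sets $\mathcal{D}_i\subseteq\mathbb{C}^n$; here $M\le 2^{n\lfloor\log_2 L\rfloor}$. The decoding error probability of message $i$ is $\gamma_i(\mathscr{C})=1-\int_{\mathcal{D}_i}f_{\boldsymbol{Y}|\boldsymbol{X}}(\boldsymbol{y}|\boldsymbol{u}(i))\,d\boldsymbol{y}$ and $\gamma(\mathscr{C})=\frac1M\sum_i\gamma_i(\mathscr{C})$; the code is an $(n,M,\epsilon)$-code if $\gamma(\mathscr{C})<\epsilon$. With $\bar g(\boldsymbol{z})=\frac1n\sum_{t=1}^n g(z_t)$, the energy outage probability of message $i$ is $\theta_i(\mathscr{C},B)=\Pr[\bar g(\boldsymbol{Z})<B\mid \boldsymbol{X}=\boldsymbol{u}(i)]$ and $\theta(\mathscr{C},B)=\frac1M\sum_i\theta_i(\mathscr{C},B)$; an $(n,M,\epsilon)$-code is an $(n,M,\epsilon,B,\delta)$-code if also $\theta(\mathscr{C},B)<\delta$. Types: $P_{\boldsymbol{u}(i)}(x^{(\ell)})=\frac1n\sum_{t=1}^n\mathbf{1}\{u_t(i)=x^{(\ell)}\}$ and $P_{\mathscr{C}}(x^{(\ell)})=\frac1M\sum_{i=1}^M P_{\boldsymbol{u}(i)}(x^{(\ell)})$. *)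

theory Defs
  imports "HOL-Analysis.Analysis"
begin

text \<open>Density of a complex circularly symmetric Gaussian with centre x and
  total variance s2 (real and imaginary parts independent with variance s2/2).\<close>
definition cn_density :: "real \<Rightarrow> complex \<Rightarrow> complex \<Rightarrow> real" where
  "cn_density s2 x y = 1 / (pi * s2) * exp (- ((cmod (y - x)) ^ 2) / s2)"

definition chan_density :: "real \<Rightarrow> nat \<Rightarrow> (nat \<Rightarrow> complex) \<Rightarrow> (nat \<Rightarrow> complex) \<Rightarrow> real" where
  "chan_density s2 n x y = (\<Prod>t\<in>{1..n}. cn_density s2 (x t) (y t))"

definition cspace :: "nat \<Rightarrow> (nat \<Rightarrow> complex) measure" where
  "cspace n = PiM {1..n} (\<lambda>_. (lborel :: complex measure))"

text \<open>Output distribution (of Y, and likewise of Z) given input vector x.\<close>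
definition chan_out :: "real \<Rightarrow> nat \<Rightarrow> (nat \<Rightarrow> complex) \<Rightarrow> (nat \<Rightarrow> complex) measure" where
  "chan_out s2 n x = density (cspace n) (\<lambda>y. ennreal (chan_density s2 n x y))"

definition dec_err :: "real \<Rightarrow> nat \<Rightarrow> (nat \<Rightarrow> nat \<Rightarrow> complex) \<Rightarrow> (nat \<Rightarrow> (nat \<Rightarrow> complex) set) \<Rightarrow> nat \<Rightarrow> real" where
  "dec_err s2 n u D i = 1 - measure (chan_out s2 n (u i)) (D i)"

definition avg_dec_err :: "real \<Rightarrow> nat \<Rightarrow> nat \<Rightarrow> (nat \<Rightarrow> nat \<Rightarrow> complex) \<Rightarrow> (nat \<Rightarrow> (nat \<Rightarrow> complex) set) \<Rightarrow> real" where
  "avg_dec_err s2 n M u D = (1 / real M) * (\<Sum>i\<in>{1..M}. dec_err s2 n u D i)"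

definition gbar :: "(complex \<Rightarrow> ennreal) \<Rightarrow> nat \<Rightarrow> (nat \<Rightarrow> complex) \<Rightarrow> ennreal" where
  "gbar g n z = ennreal (1 / real n) * (\<Sum>t\<in>{1..n}. g (z t))"

definition outage :: "real \<Rightarrow> nat \<Rightarrow> (complex \<Rightarrow> ennreal) \<Rightarrow> real \<Rightarrow> (nat \<Rightarrow> nat \<Rightarrow> complex) \<Rightarrow> nat \<Rightarrow> real" where
  "outage s2 n g B u i =
     measure (chan_out s2 n (u i)) {z \<in> space (cspace n). enn2ereal (gbar g n z) < ereal B}"

definition avg_outage :: "real \<Rightarrow> nat \<Rightarrow> nat \<Rightarrow> (complex \<Rightarrow> ennreal) \<Rightarrow> real \<Rightarrow> (nat \<Rightarrow> nat \<Rightarrow> complex) \<Rightarrow> real" where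
  "avg_outage s2 n M g B u = (1 / real M) * (\<Sum>i\<in>{1..M}. outage s2 n g B u i)"

text \<open>(n,M)-code over alphabet X with peak power P: codewords u i (i = 1..M),
  coordinates u i t (t = 1..n), decoding sets D i.\<close>
definition is_code :: "complex set \<Rightarrow> real \<Rightarrow> nat \<Rightarrow> nat \<Rightarrow> (nat \<Rightarrow> nat \<Rightarrow> complex) \<Rightarrow> (nat \<Rightarrow> (nat \<Rightarrow> complex) set) \<Rightarrow> bool" where
  "is_code X P n M u D \<longleftrightarrow>
     (\<forall>i\<in>{1..M}. \<forall>t\<in>{1..n}. u i t \<in> X \<and> cmod (u i t) \<le> P) \<and>
     (\<forall>i\<in>{1..M}. D i \<in> sets (cspace n)) \<and>
     disjoint_family_on D {1..M} \<and>
     real M \<le> 2 powr (real n * real_of_int \<lfloor>log 2 (real (card X))\<rfloor>)"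

definition is_err_code :: "complex set \<Rightarrow> real \<Rightarrow> real \<Rightarrow> nat \<Rightarrow> nat \<Rightarrow> real \<Rightarrow> (nat \<Rightarrow> nat \<Rightarrow> complex) \<Rightarrow> (nat \<Rightarrow> (nat \<Rightarrow> complex) set) \<Rightarrow> bool" where
  "is_err_code X P s2 n M \<epsilon> u D \<longleftrightarrow> is_code X P n M u D \<and> avg_dec_err s2 n M u D < \<epsilon>"

definition is_energy_code :: "complex set \<Rightarrow> real \<Rightarrow> real \<Rightarrow> nat \<Rightarrow> nat \<Rightarrow> real \<Rightarrow> (complex \<Rightarrow> ennreal) \<Rightarrow> real \<Rightarrow> real \<Rightarrow> (nat \<Rightarrow> nat \<Rightarrow> complex) \<Rightarrow> (nat \<Rightarrow> (nat \<Rightarrow> complex) set) \<Rightarrow> bool" where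
  "is_energy_code X P s2 n M \<epsilon> g B \<delta> u D \<longleftrightarrow>
     is_err_code X P s2 n M \<epsilon> u D \<and> avg_outage s2 n M g B u < \<delta>"

definition type_cw :: "nat \<Rightarrow> (nat \<Rightarrow> nat \<Rightarrow> complex) \<Rightarrow> nat \<Rightarrow> complex \<Rightarrow> real" where
  "type_cw n u i a = (1 / real n) * real (card {t \<in> {1..n}. u i t = a})"

definition type_code :: "nat \<Rightarrow> nat \<Rightarrow> (nat \<Rightarrow> nat \<Rightarrow> complex) \<Rightarrow> complex \<Rightarrow> real" where
  "type_code n M u a = (1 / real M) * (\<Sum>i\<in>{1..M}. type_cw n u i a)"

definition cn_measure :: "real \<Rightarrow> complex measure" where
  "cn_measure s2 = density lborel (\<lambda>w. ennreal (cn_density s2 0 w))"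

definition cn_expect :: "real \<Rightarrow> (complex \<Rightarrow> ennreal) \<Rightarrow> complex \<Rightarrow> ennreal" where
  "cn_expect s2 g a = (\<integral>\<^sup>+ w. g (a + w) \<partial>cn_measure s2)"

end

theory Submission
  imports Defs "HOL-Probability.Probability"
begin

(* For every message i, Markov's inequality applied to the harvested energy gives
   B (1 - theta_i) <= E[gbar(Z)], and since the coordinates of Z are independent complex
   Gaussians centred at the codeword symbols, E[gbar(Z)] = (1/n) sum_t E[g(u_t(i) + W)].
   Averaging over the messages and grouping the positions t by the transmitted symbol turns
   the right-hand side into sum_l P_C(x_l) E[g(x_l + W)], while the left-hand side becomes
   B (1 - theta) >= B (1 - delta). *)

lemma sum_eq_sum_card_fibres:
  fixes E :: "'a \<Rightarrow> 'b::semiring_1"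
  assumes "finite T" "finite Ls" "inj_on x Ls" "v ` T \<subseteq> x ` Ls"
  shows "(\<Sum>t\<in>T. E (v t)) = (\<Sum>l\<in>Ls. of_nat (card {t\<in>T. v t = x l}) * E (x l))"
proof -
  have "(\<Sum>t\<in>T. E (v t)) = (\<Sum>a\<in>x ` Ls. \<Sum>t\<in>{t\<in>T. v t = a}. E (v t))"
    using assms by (intro sum.group[symmetric]) auto
  also have "\<dots> = (\<Sum>l\<in>Ls. \<Sum>t\<in>{t\<in>T. v t = x l}. E (v t))"
    using assms(3) by (simp add: sum.reindex)
  also have "\<dots> = (\<Sum>l\<in>Ls. of_nat (card {t\<in>T. v t = x l}) * E (x l))"
    by (intro sum.cong refl) simp
  finally show ?thesis .
qed

lemma cn_density_0_eq_normal_density: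
  assumes "s2 > 0"
  shows "cn_density s2 0 w =
    normal_density 0 (sqrt (s2/2)) (Re w) * normal_density 0 (sqrt (s2/2)) (Im w)"
proof -
  have "normal_density 0 (sqrt (s2/2)) r = 1 / sqrt (pi * s2) * exp (- (r\<^sup>2) / s2)" for r
    using assms unfolding normal_density_def by (simp add: field_simps)
  then have "normal_density 0 (sqrt (s2/2)) (Re w) * normal_density 0 (sqrt (s2/2)) (Im w)
      = (1 / sqrt (pi * s2))\<^sup>2 * (exp (- ((Re w)\<^sup>2) / s2) * exp (- ((Im w)\<^sup>2) / s2))"
    by (simp add: power2_eq_square)
  also have "\<dots> = cn_density s2 0 w"
    using assms unfolding cn_density_def
    by (simp add: power_divide exp_add[symmetric] cmod_power2 add_divide_distrib diff_divide_distrib)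
  finally show ?thesis ..
qed

lemma cn_density_nonneg: "s2 > 0 \<Longrightarrow> 0 \<le> cn_density s2 a y"
  unfolding cn_density_def by simp

lemma cn_density_translate: "cn_density s2 a (a + y) = cn_density s2 0 y"
  unfolding cn_density_def by simp

lemma borel_measurable_cn_density[measurable]:
  "(\<lambda>y. cn_density s2 a y) \<in> borel_measurable borel"
  unfolding cn_density_def by measurable

lemma nn_integral_lborel_translate:
  fixes h :: "'a::euclidean_space \<Rightarrow> ennreal"
  assumes [measurable]: "h \<in> borel_measurable borel"
  shows "(\<integral>\<^sup>+ y. h y \<partial>lborel) = (\<integral>\<^sup>+ y. h (a + y) \<partial>lborel)"
proof -
  have "(\<integral>\<^sup>+ y. h y \<partial>lborel) = (\<integral>\<^sup>+ y. h y \<partial>distr lborel borel ((+) a))"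
    by (simp add: lborel_distr_plus)
  also have "\<dots> = (\<integral>\<^sup>+ y. h (a + y) \<partial>lborel)"
    by (simp add: nn_integral_distr)
  finally show ?thesis .
qed

lemma nn_integral_cn_density:
  assumes "s2 > 0"
  shows "(\<integral>\<^sup>+ y. ennreal (cn_density s2 a y) \<partial>(lborel :: complex measure)) = 1"
proof -
  let ?f = "\<lambda>(b::complex) r. ennreal (normal_density 0 (sqrt (s2/2)) r)"
  have normal: "(\<integral>\<^sup>+ r. ennreal (normal_density 0 (sqrt (s2/2)) r) \<partial>lborel) = 1"
    using assms by (simp add: nn_integral_eq_integral)
  have "(\<integral>\<^sup>+ y. ennreal (cn_density s2 a y) \<partial>lborel) =
      (\<integral>\<^sup>+ w. ennreal (cn_density s2 0 w) \<partial>(lborel :: complex measure))"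
    by (subst nn_integral_lborel_translate[where a = a]) (simp_all add: cn_density_translate)
  also have "\<dots> = (\<integral>\<^sup>+ w. (\<Prod>b\<in>Basis. ?f b (w \<bullet> b)) \<partial>lborel)"
    using assms by (simp add: Basis_complex_def cn_density_0_eq_normal_density ennreal_mult)
  also have "\<dots> = (\<Prod>b\<in>(Basis::complex set). \<integral>\<^sup>+ r. ?f b r \<partial>lborel)"
    by (rule nn_integral_lborel_prod) auto
  also have "\<dots> = 1"
    using normal by simp
  finally show ?thesis .
qed

lemma nn_integral_cn_density_mult:
  assumes [measurable]: "g \<in> borel_measurable borel"
  shows "(\<integral>\<^sup>+ y. ennreal (cn_density s2 a y) * g y \<partial>lborel) = cn_expect s2 g a"
  unfolding cn_expect_def cn_measure_def
  by (subst nn_integral_lborel_translate[where a = a])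
    (simp_all add: cn_density_translate nn_integral_density)

interpretation complex_product: product_sigma_finite "\<lambda>_::nat. (lborel :: complex measure)"
  by standard

lemma borel_measurable_chan_density[measurable]:
  "(\<lambda>y. chan_density s2 n x y) \<in> borel_measurable (cspace n)"
  unfolding chan_density_def cspace_def by measurable

lemma sets_chan_out[measurable_cong]: "sets (chan_out s2 n x) = sets (cspace n)"
  unfolding chan_out_def by simp

lemma ennreal_chan_density:
  assumes "s2 > 0"
  shows "ennreal (chan_density s2 n x y) = (\<Prod>t\<in>{1..n}. ennreal (cn_density s2 (x t) (y t)))"
  unfolding chan_density_def using assms by (simp add: prod_ennreal cn_density_nonneg)

lemma prob_space_chan_out:
  assumes "s2 > 0"
  shows "prob_space (chan_out s2 n x)"
proof
  have "emeasure (chan_out s2 n x) (space (chan_out s2 n x)) =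
      (\<integral>\<^sup>+ z. (\<Prod>t\<in>{1..n}. ennreal (cn_density s2 (x t) (z t))) \<partial>cspace n)"
    unfolding chan_out_def using assms
    by (subst emeasure_density[where f = "\<lambda>y. ennreal (chan_density s2 n x y)"], measurable, simp)
      (auto intro!: nn_integral_cong simp: ennreal_chan_density)
  also have "\<dots> = (\<Prod>t\<in>{1..n}. \<integral>\<^sup>+ y. ennreal (cn_density s2 (x t) y) \<partial>lborel)"
    unfolding cspace_def by (rule complex_product.product_nn_integral_prod) auto
  also have "\<dots> = 1"
    using assms by (simp add: nn_integral_cn_density)
  finally show "emeasure (chan_out s2 n x) (space (chan_out s2 n x)) = 1" .
qed

lemma nn_integral_chan_out_coordinate:
  assumes "s2 > 0" and [measurable]: "g \<in> borel_measurable borel" and t: "t \<in> {1..n}"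
  shows "(\<integral>\<^sup>+ z. g (z t) \<partial>chan_out s2 n x) = cn_expect s2 g (x t)"
proof -
  let ?h = "\<lambda>s y. ennreal (cn_density s2 (x s) y) * (if s = t then g y else 1)"
  have [measurable]: "(\<lambda>z. g (z t)) \<in> borel_measurable (cspace n)"
    unfolding cspace_def using t by measurable
  have "(\<integral>\<^sup>+ z. g (z t) \<partial>chan_out s2 n x) =
      (\<integral>\<^sup>+ z. ennreal (chan_density s2 n x z) * g (z t) \<partial>cspace n)"
    unfolding chan_out_def by (simp add: nn_integral_density)
  also have "\<dots> = (\<integral>\<^sup>+ z. (\<Prod>s\<in>{1..n}. ?h s (z s)) \<partial>cspace n)"
    using assms by (simp add: prod.distrib ennreal_chan_density)
  also have "\<dots> = (\<Prod>s\<in>{1..n}. \<integral>\<^sup>+ y. ?h s y \<partial>lborel)"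
    unfolding cspace_def by (rule complex_product.product_nn_integral_prod) auto
  also have "\<dots> = (\<Prod>s\<in>{1..n}. if s = t then cn_expect s2 g (x t) else 1)"
  proof (rule prod.cong)
    show "(\<integral>\<^sup>+ y. ?h s y \<partial>lborel) = (if s = t then cn_expect s2 g (x t) else 1)" for s
      using assms by (cases "s = t") (simp_all add: nn_integral_cn_density nn_integral_cn_density_mult)
  qed simp
  also have "\<dots> = cn_expect s2 g (x t)"
    using t by simp
  finally show ?thesis .
qed

lemma borel_measurable_gbar[measurable]:
  "gbar g n \<in> borel_measurable (cspace n)" if [measurable]: "g \<in> borel_measurable borel"
  unfolding gbar_def cspace_def by measurable

lemma nn_integral_gbar_chan_out:
  assumes "s2 > 0" and [measurable]: "g \<in> borel_measurable borel"
  shows "(\<integral>\<^sup>+ z. gbar g n z \<partial>chan_out s2 n x) =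
    ennreal (1 / real n) * (\<Sum>t\<in>{1..n}. cn_expect s2 g (x t))"
proof -
  have coordinate: "(\<lambda>z. g (z t)) \<in> borel_measurable (chan_out s2 n x)" if "t \<in> {1..n}" for t
    unfolding chan_out_def cspace_def using that by measurable
  have "(\<integral>\<^sup>+ z. gbar g n z \<partial>chan_out s2 n x) =
      ennreal (1 / real n) * (\<Sum>t\<in>{1..n}. \<integral>\<^sup>+ z. g (z t) \<partial>chan_out s2 n x)"
    unfolding gbar_def using coordinate
    by (subst nn_integral_cmult, measurable, subst nn_integral_sum) auto
  then show ?thesis
    using assms by (simp add: nn_integral_chan_out_coordinate)
qed

lemma (in prob_space) Markov_inequality_compl:
  assumes [measurable]: "f \<in> borel_measurable M" and "0 \<le> B"
  shows "ennreal (B * (1 - prob {x \<in> space M. enn2ereal (f x) < ereal B})) \<le> (\<integral>\<^sup>+ x. f x \<partial>M)"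
proof -
  define S where "S = {x \<in> space M. enn2ereal (f x) < ereal B}"
  define C where "C = {x \<in> space M. ennreal B \<le> f x}"
  have [measurable]: "S \<in> events" "C \<in> events"
    unfolding S_def C_def by measurable
  have "space M - S = C"
    using \<open>0 \<le> B\<close> unfolding S_def C_def by (auto simp: less_eq_ennreal.rep_eq)
  then have "prob C = 1 - prob S"
    using prob_compl by auto
  then have "ennreal (B * (1 - prob S)) = ennreal B * emeasure M C"
    using \<open>0 \<le> B\<close> by (simp add: emeasure_eq_measure ennreal_mult')
  also have "\<dots> = (\<integral>\<^sup>+ x. ennreal B * indicator C x \<partial>M)"
    by (simp add: nn_integral_cmult_indicator)
  also have "\<dots> \<le> (\<integral>\<^sup>+ x. f x \<partial>M)"
    by (intro nn_integral_mono) (auto simp: indicator_def C_def)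
  finally show ?thesis
    unfolding S_def .
qed

lemma outage_le_1:
  assumes "s2 > 0"
  shows "outage s2 n g B u i \<le> 1"
proof -
  interpret prob_space "chan_out s2 n (u i)"
    using assms by (rule prob_space_chan_out)
  show ?thesis
    unfolding outage_def by simp
qed

lemma outage_Markov:
  assumes "s2 > 0" and "g \<in> borel_measurable borel" and "0 \<le> B"
  shows "ennreal (B * (1 - outage s2 n g B u i)) \<le>
    ennreal (1 / real n) * (\<Sum>t\<in>{1..n}. cn_expect s2 g (u i t))"
proof -
  interpret prob_space "chan_out s2 n (u i)"
    using assms(1) by (rule prob_space_chan_out)
  have "space (chan_out s2 n (u i)) = space (cspace n)"
    unfolding chan_out_def by simp
  then show ?thesis
    using Markov_inequality_compl[of "gbar g n" B] assms
    unfolding outage_def by (simp add: nn_integral_gbar_chan_out)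
qed

lemma avg_outage_Markov:
  assumes "s2 > 0" and "g \<in> borel_measurable borel" and "0 \<le> B" and "M \<ge> 1"
  shows "ennreal (B * (1 - avg_outage s2 n M g B u)) \<le>
    ennreal (1 / real M) * (\<Sum>i\<in>{1..M}. ennreal (1 / real n) * (\<Sum>t\<in>{1..n}. cn_expect s2 g (u i t)))"
proof -
  have average: "B * (1 - avg_outage s2 n M g B u) = 1 / real M * (\<Sum>i\<in>{1..M}. B * (1 - outage s2 n g B u i))"
    using \<open>M \<ge> 1\<close> unfolding avg_outage_def
    by (simp add: sum_subtractf sum_distrib_left[symmetric] field_simps)
  have "ennreal (B * (1 - avg_outage s2 n M g B u)) =
      ennreal (1 / real M) * ennreal (\<Sum>i\<in>{1..M}. B * (1 - outage s2 n g B u i))"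
    unfolding average by (rule ennreal_mult') simp
  also have "\<dots> = ennreal (1 / real M) * (\<Sum>i\<in>{1..M}. ennreal (B * (1 - outage s2 n g B u i)))"
    using assms by (simp add: outage_le_1)
  also have "\<dots> \<le> ennreal (1 / real M) *
      (\<Sum>i\<in>{1..M}. ennreal (1 / real n) * (\<Sum>t\<in>{1..n}. cn_expect s2 g (u i t)))"
    using assms by (intro mult_left_mono sum_mono outage_Markov) auto
  finally show ?thesis .
qed

lemma ennreal_type_code:
  "ennreal (type_code n M u a) =
    ennreal (1 / real M) * (\<Sum>i\<in>{1..M}. ennreal (1 / real n) * of_nat (card {t\<in>{1..n}. u i t = a}))"
proof -
  have "ennreal (type_code n M u a) =
      ennreal (1 / real M) * ennreal (\<Sum>i\<in>{1..M}. 1 / real n * real (card {t\<in>{1..n}. u i t = a}))"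
    unfolding type_code_def type_cw_def by (rule ennreal_mult') simp
  also have "\<dots> = ennreal (1 / real M) * (\<Sum>i\<in>{1..M}. ennreal (1 / real n * real (card {t\<in>{1..n}. u i t = a})))"
    by simp
  also have "\<dots> = ennreal (1 / real M) * (\<Sum>i\<in>{1..M}. ennreal (1 / real n) * of_nat (card {t\<in>{1..n}. u i t = a}))"
    by (subst ennreal_mult') (simp_all add: ennreal_of_nat_eq_real_of_nat)
  finally show ?thesis .
qed

lemma sum_type_code_mult:
  fixes E :: "complex \<Rightarrow> ennreal"
  assumes "finite Ls" "inj_on x Ls" "\<forall>i\<in>{1..M}. \<forall>t\<in>{1..n}. u i t \<in> x ` Ls"
  shows "(\<Sum>l\<in>Ls. ennreal (type_code n M u (x l)) * E (x l)) =
    ennreal (1 / real M) * (\<Sum>i\<in>{1..M}. ennreal (1 / real n) * (\<Sum>t\<in>{1..n}. E (u i t)))"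
proof -
  let ?c = "\<lambda>i l. of_nat (card {t\<in>{1..n}. u i t = x l}) :: ennreal"
  have fibres: "(\<Sum>t\<in>{1..n}. E (u i t)) = (\<Sum>l\<in>Ls. ?c i l * E (x l))" if "i \<in> {1..M}" for i
    using assms that by (intro sum_eq_sum_card_fibres) auto
  have "(\<Sum>l\<in>Ls. ennreal (type_code n M u (x l)) * E (x l)) =
      ennreal (1 / real M) * (\<Sum>i\<in>{1..M}. ennreal (1 / real n) * (\<Sum>l\<in>Ls. ?c i l * E (x l)))"
    unfolding ennreal_type_code
    by (simp add: sum_distrib_left sum_distrib_right sum.swap[of _ Ls] mult.assoc)
  also have "\<dots> = ennreal (1 / real M) * (\<Sum>i\<in>{1..M}. ennreal (1 / real n) * (\<Sum>t\<in>{1..n}. E (u i t)))"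
    by (intro arg_cong[where f = "\<lambda>s. ennreal (1 / real M) * s"] sum.cong refl) (simp only: fibres)
  finally show ?thesis .
qed

theorem lemma1:
  fixes n M L :: nat and x :: "nat \<Rightarrow> complex" and s2 P \<epsilon> B \<delta> :: real
    and g :: "complex \<Rightarrow> ennreal"
    and u :: "nat \<Rightarrow> nat \<Rightarrow> complex" and D :: "nat \<Rightarrow> (nat \<Rightarrow> complex) set"
  assumes "n \<ge> 1" and "M \<ge> 1"
    and "inj_on x {1..L}"
    and "s2 > 0" and "P > 0"
    and "g \<in> borel_measurable borel"
    and "\<epsilon> > 0" and "\<delta> < 1"
    and "is_energy_code (x ` {1..L}) P s2 n M \<epsilon> g B \<delta> u D"
  shows "ereal B \<le> enn2ereal (ennreal (1 / (1 - \<delta>)) *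
           (\<Sum>l\<in>{1..L}. ennreal (type_code n M u (x l)) * cn_expect s2 g (x l)))"
proof (cases "B \<le> 0")
  case True
  then show ?thesis
    by (intro order_trans[OF _ enn2ereal_nonneg]) simp
next
  case False
  then have "0 \<le> B" by simp
  from assms(9) have code: "\<forall>i\<in>{1..M}. \<forall>t\<in>{1..n}. u i t \<in> x ` {1..L}"
    and outage: "avg_outage s2 n M g B u < \<delta>"
    unfolding is_energy_code_def is_err_code_def is_code_def by auto
  let ?R = "\<Sum>l\<in>{1..L}. ennreal (type_code n M u (x l)) * cn_expect s2 g (x l)"
  have "ennreal (B * (1 - \<delta>)) \<le> ennreal (B * (1 - avg_outage s2 n M g B u))"
    using outage \<open>0 \<le> B\<close> by (intro ennreal_leI mult_left_mono) auto
  also have "\<dots> \<le> ?R"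
    using avg_outage_Markov[of s2 g B M n u] sum_type_code_mult[OF _ assms(3) code] assms
    by (simp add: \<open>0 \<le> B\<close>)
  finally have "ennreal (1 / (1 - \<delta>)) * ennreal (B * (1 - \<delta>)) \<le> ennreal (1 / (1 - \<delta>)) * ?R"
    by (rule mult_left_mono) simp
  moreover have "ennreal (1 / (1 - \<delta>)) * ennreal (B * (1 - \<delta>)) = ennreal B"
    using \<open>\<delta> < 1\<close> \<open>0 \<le> B\<close> by (simp add: ennreal_mult'[symmetric])
  ultimately show ?thesis
    using \<open>0 \<le> B\<close> by (simp add: less_eq_ennreal.rep_eq)
qed

end
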